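(* Let $\mathcal{C}$ be a monopole and $x$ an object of $\mathcal{C}$. If $\mu_x:x\to y$ is a completion of $x$ in $\mathcal{C}$, then $y$ is complete in $\mathcal{C}$, i.e. $1_y:y\to y$ is a completion of $y$ in $\mathcal{C}$.
   Context: A refinement of a category is a subcategory containing all objects and all isomorphisms. A (positive) monopole is a category $\mathcal{C}$ with a distinguished refinement $\mathcal{C}_+$ whose arrows are called positive. For an object $x$, the co-slice $x\downarrow\mathcal{C}$ is the category whose objects are the positive arrows $f:x\to a$, with morphisms from $f:x\to a$ to $g:x\to b$ the arrows $\xi:a\to b$ of $\mathcal{C}$ with $\xi\circ f=g$. An object $z$ of a category is amphi-terminal if every object has at least one arrow to $z$ and $z$ has at most one arrow to any object. A completion of $x$ in $\mathcal{C}$ is an amphi-terminal object of $x\downarrow\mathcal{C}$; $x$ is complete in $\mathcal{C}$ if $1_x$ is a completion of $x$. *)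

theory Defs
  imports Main
begin

text \<open>A (small) category given explicitly: objects, arrows, domain, codomain,
  identities and composition. cComp C g f denotes g composed after f.\<close>
record ('o, 'a) cat =
  cObj  :: "'o set"
  cArr  :: "'a set"
  cDom  :: "'a \<Rightarrow> 'o"
  cCod  :: "'a \<Rightarrow> 'o"
  cId   :: "'o \<Rightarrow> 'a"
  cComp :: "'a \<Rightarrow> 'a \<Rightarrow> 'a"

definition category :: "('o, 'a) cat \<Rightarrow> bool" where
  "category C \<longleftrightarrow>
     (\<forall>f\<in>cArr C. cDom C f \<in> cObj C \<and> cCod C f \<in> cObj C) \<and>
     (\<forall>x\<in>cObj C. cId C x \<in> cArr C \<and> cDom C (cId C x) = x \<and> cCod C (cId C x) = x) \<and>
     (\<forall>f\<in>cArr C. \<forall>g\<in>cArr C. cCod C f = cDom C g \<longrightarrow>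
        cComp C g f \<in> cArr C \<and> cDom C (cComp C g f) = cDom C f \<and> cCod C (cComp C g f) = cCod C g) \<and>
     (\<forall>f\<in>cArr C. cComp C (cId C (cCod C f)) f = f \<and> cComp C f (cId C (cDom C f)) = f) \<and>
     (\<forall>f\<in>cArr C. \<forall>g\<in>cArr C. \<forall>h\<in>cArr C. cCod C f = cDom C g \<longrightarrow> cCod C g = cDom C h \<longrightarrow>
        cComp C h (cComp C g f) = cComp C (cComp C h g) f)"

definition iso :: "('o, 'a) cat \<Rightarrow> 'a \<Rightarrow> bool" where
  "iso C f \<longleftrightarrow> f \<in> cArr C \<and>
     (\<exists>g\<in>cArr C. cDom C g = cCod C f \<and> cCod C g = cDom C f \<and>
        cComp C g f = cId C (cDom C f) \<and> cComp C f g = cId C (cCod C f))"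

text \<open>A refinement: a subcategory (given by its set of arrows P) containing
  all objects (i.e. their identities) and all isomorphisms.\<close>
definition refinement :: "('o, 'a) cat \<Rightarrow> 'a set \<Rightarrow> bool" where
  "refinement C P \<longleftrightarrow> P \<subseteq> cArr C \<and>
     (\<forall>x\<in>cObj C. cId C x \<in> P) \<and>
     (\<forall>f\<in>P. \<forall>g\<in>P. cCod C f = cDom C g \<longrightarrow> cComp C g f \<in> P) \<and>
     (\<forall>f. iso C f \<longrightarrow> f \<in> P)"

definition monopole :: "('o, 'a) cat \<Rightarrow> 'a set \<Rightarrow> bool" where
  "monopole C P \<longleftrightarrow> category C \<and> refinement C P"

definition coslice :: "('o, 'a) cat \<Rightarrow> 'a set \<Rightarrow> 'o \<Rightarrow> ('a, 'a \<times> 'a \<times> 'a) cat" where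
  "coslice C P x = \<lparr>
     cObj = {f \<in> P. cDom C f = x},
     cArr = {(f, \<xi>, g). f \<in> P \<and> cDom C f = x \<and> g \<in> P \<and> cDom C g = x \<and>
               \<xi> \<in> cArr C \<and> cDom C \<xi> = cCod C f \<and> cCod C \<xi> = cCod C g \<and> cComp C \<xi> f = g},
     cDom = (\<lambda>(f, \<xi>, g). f),
     cCod = (\<lambda>(f, \<xi>, g). g),
     cId = (\<lambda>f. (f, cId C (cCod C f), f)),
     cComp = (\<lambda>(g, \<eta>, h) (f, \<xi>, g'). (f, cComp C \<eta> \<xi>, h)) \<rparr>"

definition amphi_terminal :: "('o, 'a) cat \<Rightarrow> 'o \<Rightarrow> bool" where
  "amphi_terminal D z \<longleftrightarrow> z \<in> cObj D \<and>
     (\<forall>a\<in>cObj D. \<exists>h\<in>cArr D. cDom D h = a \<and> cCod D h = z) \<and>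
     (\<forall>a\<in>cObj D. \<forall>h\<in>cArr D. \<forall>h'\<in>cArr D.
        cDom D h = z \<and> cCod D h = a \<and> cDom D h' = z \<and> cCod D h' = a \<longrightarrow> h = h')"

definition completion :: "('o, 'a) cat \<Rightarrow> 'a set \<Rightarrow> 'o \<Rightarrow> 'a \<Rightarrow> bool" where
  "completion C P x f \<longleftrightarrow> amphi_terminal (coslice C P x) f"

definition complete :: "('o, 'a) cat \<Rightarrow> 'a set \<Rightarrow> 'o \<Rightarrow> bool" where
  "complete C P x \<longleftrightarrow> completion C P x (cId C x)"

end

theory Submission
  imports Defs
begin

text \<open>Let \<open>\<mu> : x \<rightarrow> y\<close> be a completion. For a positive \<open>f : y \<rightarrow> a\<close>, the positive arrow
  \<open>f \<circ> \<mu>\<close> factors back through \<open>\<mu>\<close> as \<open>\<xi> \<circ> f \<circ> \<mu> = \<mu>\<close>. Then \<open>\<xi> \<circ> f\<close> and \<open>1\<^sub>y\<close> are both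
  endomorphisms of \<open>\<mu>\<close> in \<open>x \<down> C\<close>, so \<open>\<xi> \<circ> f = 1\<^sub>y\<close>: every positive arrow out of \<open>y\<close> has a
  retraction onto \<open>y\<close>. This is exactly what it means for \<open>1\<^sub>y\<close> to be a completion of \<open>y\<close>,
  since \<open>1\<^sub>y\<close> admits at most one arrow to any object of \<open>y \<down> C\<close>.\<close>

lemma coslice_obj_iff [simp]: "f \<in> cObj (coslice C P x) \<longleftrightarrow> f \<in> P \<and> cDom C f = x"
  by (simp add: coslice_def)

lemma coslice_arr_iff [simp]:
  "(f, \<xi>, g) \<in> cArr (coslice C P x) \<longleftrightarrow>
     f \<in> P \<and> cDom C f = x \<and> g \<in> P \<and> cDom C g = x \<and>
     \<xi> \<in> cArr C \<and> cDom C \<xi> = cCod C f \<and> cCod C \<xi> = cCod C g \<and> cComp C \<xi> f = g"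
  by (simp add: coslice_def)

lemma coslice_dom [simp]: "cDom (coslice C P x) (f, \<xi>, g) = f"
  and coslice_cod [simp]: "cCod (coslice C P x) (f, \<xi>, g) = g"
  by (simp_all add: coslice_def)

locale positive_monopole =
  fixes C :: "('o, 'a) cat" and P :: "'a set"
  assumes monopole: "monopole C P"
begin

abbreviation comp :: "'a \<Rightarrow> 'a \<Rightarrow> 'a" (infixr "\<cdot>" 70)
  where "g \<cdot> f \<equiv> cComp C g f"

lemma category: "category C"
  and refinement: "refinement C P"
  using monopole by (simp_all add: monopole_def)

lemma cod_in_obj: "f \<in> cArr C \<Longrightarrow> cCod C f \<in> cObj C"
  using category by (simp add: category_def)

lemma id_in_arr: "a \<in> cObj C \<Longrightarrow> cId C a \<in> cArr C"
  and dom_id [simp]: "a \<in> cObj C \<Longrightarrow> cDom C (cId C a) = a"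
  and cod_id [simp]: "a \<in> cObj C \<Longrightarrow> cCod C (cId C a) = a"
  using category by (simp_all add: category_def)

lemma comp_in_arr: "f \<in> cArr C \<Longrightarrow> g \<in> cArr C \<Longrightarrow> cCod C f = cDom C g \<Longrightarrow> g \<cdot> f \<in> cArr C"
  and dom_comp: "f \<in> cArr C \<Longrightarrow> g \<in> cArr C \<Longrightarrow> cCod C f = cDom C g \<Longrightarrow> cDom C (g \<cdot> f) = cDom C f"
  and cod_comp: "f \<in> cArr C \<Longrightarrow> g \<in> cArr C \<Longrightarrow> cCod C f = cDom C g \<Longrightarrow> cCod C (g \<cdot> f) = cCod C g"
  using category unfolding category_def by blast+

lemma comp_id_left: "f \<in> cArr C \<Longrightarrow> cId C (cCod C f) \<cdot> f = f"
  and comp_id_right: "f \<in> cArr C \<Longrightarrow> f \<cdot> cId C (cDom C f) = f"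
  using category by (simp_all add: category_def)

lemma comp_assoc:
  "f \<in> cArr C \<Longrightarrow> g \<in> cArr C \<Longrightarrow> h \<in> cArr C \<Longrightarrow> cCod C f = cDom C g \<Longrightarrow> cCod C g = cDom C h \<Longrightarrow>
     h \<cdot> (g \<cdot> f) = (h \<cdot> g) \<cdot> f"
  using category unfolding category_def by blast

lemma positive_in_arr: "f \<in> P \<Longrightarrow> f \<in> cArr C"
  and id_positive: "a \<in> cObj C \<Longrightarrow> cId C a \<in> P"
  and comp_positive: "f \<in> P \<Longrightarrow> g \<in> P \<Longrightarrow> cCod C f = cDom C g \<Longrightarrow> g \<cdot> f \<in> P"
  using refinement unfolding refinement_def by blast+

lemma completion_iff:
  "completion C P x \<mu> \<longleftrightarrow> \<mu> \<in> P \<and> cDom C \<mu> = x \<and>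
     (\<forall>f\<in>P. cDom C f = x \<longrightarrow>
        (\<exists>\<xi>\<in>cArr C. cDom C \<xi> = cCod C f \<and> cCod C \<xi> = cCod C \<mu> \<and> \<xi> \<cdot> f = \<mu>)) \<and>
     (\<forall>\<xi>\<in>cArr C. \<forall>\<xi>'\<in>cArr C. cDom C \<xi> = cCod C \<mu> \<longrightarrow> cDom C \<xi>' = cCod C \<mu> \<longrightarrow>
        cCod C \<xi> = cCod C \<xi>' \<longrightarrow> \<xi> \<cdot> \<mu> \<in> P \<longrightarrow> \<xi> \<cdot> \<mu> = \<xi>' \<cdot> \<mu> \<longrightarrow> \<xi> = \<xi>')"
proof (cases "\<mu> \<in> P \<and> cDom C \<mu> = x")
  case True
  then have "\<mu> \<in> cArr C" and "cDom C \<mu> = x"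
    by (auto intro: positive_in_arr)
  let ?D = "coslice C P x"
  have exists_iff:
    "(\<forall>f\<in>cObj ?D. \<exists>h\<in>cArr ?D. cDom ?D h = f \<and> cCod ?D h = \<mu>) \<longleftrightarrow>
     (\<forall>f\<in>P. cDom C f = x \<longrightarrow>
        (\<exists>\<xi>\<in>cArr C. cDom C \<xi> = cCod C f \<and> cCod C \<xi> = cCod C \<mu> \<and> \<xi> \<cdot> f = \<mu>))"
    using True by (fastforce simp: Bex_def)
  have unique_iff:
    "(\<forall>a\<in>cObj ?D. \<forall>h\<in>cArr ?D. \<forall>h'\<in>cArr ?D.
        cDom ?D h = \<mu> \<and> cCod ?D h = a \<and> cDom ?D h' = \<mu> \<and> cCod ?D h' = a \<longrightarrow> h = h') \<longleftrightarrow>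
     (\<forall>\<xi>\<in>cArr C. \<forall>\<xi>'\<in>cArr C. cDom C \<xi> = cCod C \<mu> \<longrightarrow> cDom C \<xi>' = cCod C \<mu> \<longrightarrow>
        cCod C \<xi> = cCod C \<xi>' \<longrightarrow> \<xi> \<cdot> \<mu> \<in> P \<longrightarrow> \<xi> \<cdot> \<mu> = \<xi>' \<cdot> \<mu> \<longrightarrow> \<xi> = \<xi>')"
    (is "?L \<longleftrightarrow> ?R")
  proof
    assume unique: ?L
    show ?R
    proof (intro ballI impI)
      fix \<xi> \<xi>'
      assume "\<xi> \<in> cArr C" "\<xi>' \<in> cArr C" "cDom C \<xi> = cCod C \<mu>" "cDom C \<xi>' = cCod C \<mu>"
        "cCod C \<xi> = cCod C \<xi>'" "\<xi> \<cdot> \<mu> \<in> P" "\<xi> \<cdot> \<mu> = \<xi>' \<cdot> \<mu>"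
      moreover have "cDom C (\<xi> \<cdot> \<mu>) = x" "cCod C (\<xi> \<cdot> \<mu>) = cCod C \<xi>"
        using \<open>\<mu> \<in> cArr C\<close> \<open>\<xi> \<in> cArr C\<close> \<open>cDom C \<xi> = cCod C \<mu>\<close> \<open>cDom C \<mu> = x\<close>
        by (simp_all add: dom_comp cod_comp)
      ultimately have "(\<mu>, \<xi>, \<xi> \<cdot> \<mu>) = (\<mu>, \<xi>', \<xi> \<cdot> \<mu>)"
        using True by (intro unique[rule_format, of "\<xi> \<cdot> \<mu>"]) auto
      then show "\<xi> = \<xi>'" by simp
    qed
  next
    assume ?R
    then show ?L
      by (auto simp: split_paired_all)
  qed
  show ?thesis
    unfolding completion_def amphi_terminal_def using True exists_iff unique_iff by auto
next
  case False
  then show ?thesis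
    by (auto simp: completion_def amphi_terminal_def)
qed

lemma completion_positive_retraction:
  assumes completion: "completion C P x \<mu>" and cod_\<mu>: "cCod C \<mu> = y"
    and "f \<in> P" and "cDom C f = y"
  shows "\<exists>\<xi>\<in>cArr C. cDom C \<xi> = cCod C f \<and> cCod C \<xi> = y \<and> \<xi> \<cdot> f = cId C y"
proof -
  have "\<mu> \<in> P" "cDom C \<mu> = x"
    and factor: "\<forall>g\<in>P. cDom C g = x \<longrightarrow>
      (\<exists>\<xi>\<in>cArr C. cDom C \<xi> = cCod C g \<and> cCod C \<xi> = y \<and> \<xi> \<cdot> g = \<mu>)"
    and unique: "\<forall>\<xi>\<in>cArr C. \<forall>\<xi>'\<in>cArr C. cDom C \<xi> = y \<longrightarrow> cDom C \<xi>' = y \<longrightarrow>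
      cCod C \<xi> = cCod C \<xi>' \<longrightarrow> \<xi> \<cdot> \<mu> \<in> P \<longrightarrow> \<xi> \<cdot> \<mu> = \<xi>' \<cdot> \<mu> \<longrightarrow> \<xi> = \<xi>'"
    using completion_iff[THEN iffD1, OF completion] unfolding cod_\<mu> by blast+
  have "\<mu> \<in> cArr C" "f \<in> cArr C"
    using \<open>\<mu> \<in> P\<close> \<open>f \<in> P\<close> by (simp_all add: positive_in_arr)
  have "f \<cdot> \<mu> \<in> P" "cDom C (f \<cdot> \<mu>) = x" "cCod C (f \<cdot> \<mu>) = cCod C f"
    using \<open>\<mu> \<in> P\<close> \<open>f \<in> P\<close> \<open>\<mu> \<in> cArr C\<close> \<open>f \<in> cArr C\<close> \<open>cDom C f = y\<close> \<open>cDom C \<mu> = x\<close> cod_\<mu>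
    by (simp_all add: comp_positive dom_comp cod_comp)
  then obtain \<xi> where \<xi>: "\<xi> \<in> cArr C" "cDom C \<xi> = cCod C f" "cCod C \<xi> = y"
    and "\<xi> \<cdot> (f \<cdot> \<mu>) = \<mu>"
    using factor[rule_format, OF \<open>f \<cdot> \<mu> \<in> P\<close> \<open>cDom C (f \<cdot> \<mu>) = x\<close>]
    unfolding \<open>cCod C (f \<cdot> \<mu>) = cCod C f\<close> by blast
  have "y \<in> cObj C"
    using cod_in_obj[OF \<open>\<mu> \<in> cArr C\<close>] unfolding cod_\<mu> .
  have \<xi>f: "\<xi> \<cdot> f \<in> cArr C" "cDom C (\<xi> \<cdot> f) = y" "cCod C (\<xi> \<cdot> f) = y"
    using \<xi> \<open>f \<in> cArr C\<close> \<open>cDom C f = y\<close> by (simp_all add: comp_in_arr dom_comp cod_comp)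
  have id: "cId C y \<in> cArr C" "cDom C (cId C y) = y" "cCod C (cId C y) = y"
    using \<open>y \<in> cObj C\<close> by (simp_all add: id_in_arr)
  have "(\<xi> \<cdot> f) \<cdot> \<mu> = \<xi> \<cdot> (f \<cdot> \<mu>)"
    using comp_assoc[OF \<open>\<mu> \<in> cArr C\<close> \<open>f \<in> cArr C\<close> \<open>\<xi> \<in> cArr C\<close>] \<open>cDom C f = y\<close> cod_\<mu> \<xi>(2)
    by simp
  also have "\<dots> = \<mu>"
    by fact
  also have "\<mu> = cId C y \<cdot> \<mu>"
    using comp_id_left[OF \<open>\<mu> \<in> cArr C\<close>] unfolding cod_\<mu> by simp
  finally have "(\<xi> \<cdot> f) \<cdot> \<mu> = cId C y \<cdot> \<mu>" .
  moreover have "(\<xi> \<cdot> f) \<cdot> \<mu> \<in> P"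
    using calculation \<open>\<mu> \<in> P\<close> comp_id_left[OF \<open>\<mu> \<in> cArr C\<close>] cod_\<mu> by simp
  ultimately have "\<xi> \<cdot> f = cId C y"
    using unique[rule_format, OF \<xi>f(1) id(1) \<xi>f(2) id(2)] \<xi>f(3) id(3) by simp
  with \<xi> show ?thesis
    by blast
qed

lemma complete_iff_positive_retractions:
  assumes "y \<in> cObj C"
  shows "complete C P y \<longleftrightarrow>
    (\<forall>f\<in>P. cDom C f = y \<longrightarrow> (\<exists>\<xi>\<in>cArr C. cDom C \<xi> = cCod C f \<and> cCod C \<xi> = y \<and> \<xi> \<cdot> f = cId C y))"
proof -
  have cancel_id: "\<forall>\<xi>\<in>cArr C. \<forall>\<xi>'\<in>cArr C. cDom C \<xi> = y \<longrightarrow> cDom C \<xi>' = y \<longrightarrow> cCod C \<xi> = cCod C \<xi>' \<longrightarrow>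
      \<xi> \<cdot> cId C y \<in> P \<longrightarrow> \<xi> \<cdot> cId C y = \<xi>' \<cdot> cId C y \<longrightarrow> \<xi> = \<xi>'"
    using comp_id_right by metis
  show ?thesis
    unfolding complete_def completion_iff using assms by (simp add: id_positive) (use cancel_id in blast)
qed

end

theorem mainTheorem4:
  fixes C :: "('o, 'a) cat" and P :: "'a set" and x y :: 'o and \<mu> :: 'a
  assumes "monopole C P"
    and "x \<in> cObj C"
    and "completion C P x \<mu>"
    and "cCod C \<mu> = y"
  shows "complete C P y"
proof -
  interpret positive_monopole C P
    using assms(1) by unfold_locales
  have "\<mu> \<in> P"
    using assms(3) by (simp add: completion_iff)
  then have "y \<in> cObj C"
    using assms(4) by (metis positive_in_arr cod_in_obj)
  moreover have "\<forall>f\<in>P. cDom C f = y \<longrightarrow> (\<exists>\<xi>\<in>cArr C. cDom C \<xi> = cCod C f \<and> cCod C \<xi> = y \<and> \<xi> \<cdot> f = cId C y)"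
    using completion_positive_retraction[OF assms(3,4)] by blast
  ultimately show ?thesis
    by (rule complete_iff_positive_retractions[THEN iffD2])
qed

end
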